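(* Let $\beta,\mu$ be positive reals with $\beta+2\sqrt{\mu}\le\frac{1}{1200}$. Let $G$ be an $n$-vertex graph with minimum degree at least $\frac{n}{5}$ and at least $\binom{n}{2}-\beta n^2$ edges, and let $\mathcal{F}$ be a $\mu n$-bounded incompatibility system over $G$. Then for every edge $e$ of $G$ there exists a Hamilton cycle of $G$ containing $e$ that is compatible with $\mathcal{F}$.
   Context: All graphs are finite and simple. An incompatibility system $\mathcal{F}$ over $G=(V,E)$ is a family $\{F_v\}_{v\in V}$ where each $F_v$ is a set of unordered pairs $\{e,e'\}$ of distinct edges with $e\cap e'=\{v\}$; edges $e,e'$ are incompatible if $\{e,e'\}\in F_v$ for some $v$, compatible otherwise. A cycle is compatible with $\mathcal{F}$ if every pair of its edges is compatible. For a positive real $\Delta$, $\mathcal{F}$ is $\Delta$-bounded if for every vertex $v$ and edge $e\ni v$, at most $\Delta$ other edges $e'\ni v$ satisfy $\{e,e'\}\in F_v$. *)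

theory Defs
  imports Complex_Main
begin

definition simple_graph :: "'a set \<Rightarrow> 'a set set \<Rightarrow> bool" where
  "simple_graph V E \<longleftrightarrow> finite V \<and>
     (\<forall>e\<in>E. \<exists>u v. e = {u, v} \<and> u \<noteq> v \<and> u \<in> V \<and> v \<in> V)"

definition degree :: "'a set set \<Rightarrow> 'a \<Rightarrow> nat" where
  "degree E v = card {u. {u, v} \<in> E}"

definition incompatibility_system :: "'a set set \<Rightarrow> ('a \<Rightarrow> 'a set set set) \<Rightarrow> bool" where
  "incompatibility_system E F \<longleftrightarrow>
     (\<forall>v. \<forall>p\<in>F v. \<exists>e e'. p = {e, e'} \<and> e \<in> E \<and> e' \<in> E \<and> e \<noteq> e' \<and> e \<inter> e' = {v})"

definition incompatible :: "('a \<Rightarrow> 'a set set set) \<Rightarrow> 'a set \<Rightarrow> 'a set \<Rightarrow> bool" where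
  "incompatible F e e' \<longleftrightarrow> (\<exists>v. {e, e'} \<in> F v)"

definition bounded_system :: "real \<Rightarrow> 'a set set \<Rightarrow> ('a \<Rightarrow> 'a set set set) \<Rightarrow> bool" where
  "bounded_system \<Delta> E F \<longleftrightarrow>
     (\<forall>v. \<forall>e\<in>E. v \<in> e \<longrightarrow>
        real (card {e'\<in>E. e' \<noteq> e \<and> v \<in> e' \<and> {e, e'} \<in> F v}) \<le> \<Delta>)"

definition ham_cycle :: "'a set \<Rightarrow> 'a set set \<Rightarrow> 'a list \<Rightarrow> bool" where
  "ham_cycle V E vs \<longleftrightarrow> distinct vs \<and> set vs = V \<and> length vs \<ge> 3 \<and>
     (\<forall>i < length vs. {vs ! i, vs ! (Suc i mod length vs)} \<in> E)"

definition cycle_edges :: "'a list \<Rightarrow> 'a set set" where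
  "cycle_edges vs = {{vs ! i, vs ! (Suc i mod length vs)} | i. i < length vs}"

definition compatible_cycle :: "('a \<Rightarrow> 'a set set set) \<Rightarrow> 'a list \<Rightarrow> bool" where
  "compatible_cycle F vs \<longleftrightarrow>
     (\<forall>e\<in>cycle_edges vs. \<forall>e'\<in>cycle_edges vs. e \<noteq> e' \<longrightarrow> \<not> incompatible F e e')"

end

(*
  For a cyclic ordering w of V with e among its cycle edges, the
  defect counts the cycle edges that are not edges of G plus the vertices at which two
  incompatible cycle edges meet; a compatible Hamilton cycle through e is an ordering of defect 0.
  Take an ordering of minimum defect and suppose the defect is positive. Rotate it so that a
  defective cycle edge other than e joins its last vertex w(n-1) to its first vertex w(0).
  For positions lo < hi, with {y, z} = {w(lo), w(hi)}, the double switch replaces the cycle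
    w(0) .. w(lo-1) w(lo) w(lo+1) .. w(hi-1) w(hi) w(hi+1) .. w(n-1)
  by
    w(0) .. w(lo-1) w(hi-1) .. w(lo+1) w(hi+1) .. w(n-1) y z,
  which drops the edge w(n-1) w(0) and changes the cycle only at eight vertices; if the five
  new edges are edges of G compatible with their neighbours on the cycle, the defect drops.
  Minimum degree n/5, at most beta n^2 missing edges and mu n-boundedness give at least
  (n/5 - 6 - mu n)^2 candidate pairs of positions, of which at most 5n + 6 beta n^2 + 6 mu n^2
  fail, and the hypothesis beta + 2 sqrt mu <= 1/1200 makes the first number larger.
*)

theory Submission
  imports Defs
begin

section \<open>Path and cycle edges of a vertex sequence\<close>

fun path_edges :: "'a list \<Rightarrow> 'a set set" where
  "path_edges [] = {}"
| "path_edges [x] = {}"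
| "path_edges (x # y # zs) = insert {x, y} (path_edges (y # zs))"

lemma path_edges_Cons: "xs \<noteq> [] \<Longrightarrow> path_edges (x # xs) = insert {x, hd xs} (path_edges xs)"
  by (cases xs) auto

lemma path_edges_append:
  "xs \<noteq> [] \<Longrightarrow> ys \<noteq> [] \<Longrightarrow> path_edges (xs @ ys) = path_edges xs \<union> path_edges ys \<union> {{last xs, hd ys}}"
  by (induction xs rule: path_edges.induct) (auto simp: path_edges_Cons)

lemma path_edges_rev: "path_edges (rev xs) = path_edges xs"
proof (induction xs rule: path_edges.induct)
  case (3 x y zs)
  have "path_edges (rev (x # y # zs)) = path_edges (rev (y # zs) @ [x])" by simp
  also have "\<dots> = path_edges (rev (y # zs)) \<union> {{y, x}}"
    by (subst path_edges_append) (auto simp: last_rev)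
  finally show ?case using 3 by (auto simp: insert_commute)
qed auto

lemma path_edges_subset: "f \<in> path_edges xs \<Longrightarrow> f \<subseteq> set xs"
  by (induction xs rule: path_edges.induct) auto

lemma not_mem_path_edge: "f \<in> path_edges xs \<Longrightarrow> x \<notin> set xs \<Longrightarrow> x \<notin> f"
  using path_edges_subset by blast

lemma path_edges_conv_nth: "path_edges xs = {{xs ! i, xs ! Suc i} | i. Suc i < length xs}"
proof (induction xs rule: path_edges.induct)
  case (3 x y zs)
  show ?case
  proof (rule set_eqI, rule iffI)
    fix f assume "f \<in> path_edges (x # y # zs)"
    then consider "f = {x, y}" | "f \<in> path_edges (y # zs)" by auto
    then show "f \<in> {{(x # y # zs) ! i, (x # y # zs) ! Suc i} | i. Suc i < length (x # y # zs)}"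
    proof cases
      case 1 then show ?thesis by force
    next
      case 2
      then obtain i where "f = {(y # zs) ! i, (y # zs) ! Suc i}" "Suc i < length (y # zs)"
        using 3 by auto
      then show ?thesis by (intro CollectI exI[of _ "Suc i"]) auto
    qed
  next
    fix f assume "f \<in> {{(x # y # zs) ! i, (x # y # zs) ! Suc i} | i. Suc i < length (x # y # zs)}"
    then obtain i where i: "f = {(x # y # zs) ! i, (x # y # zs) ! Suc i}" "Suc i < length (x # y # zs)"
      by auto
    show "f \<in> path_edges (x # y # zs)"
    proof (cases i)
      case 0 then show ?thesis using i by simp
    next
      case (Suc j)
      then show ?thesis using i 3 by auto
    qed
  qed
qed auto

lemma path_edges_hd:
  assumes "distinct xs" "f \<in> path_edges xs" "hd xs \<in> f"
  shows "f = {hd xs, xs ! 1}"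
proof (cases xs rule: path_edges.cases)
  case (3 x y zs)
  show ?thesis
  proof (cases "f = {x, y}")
    case False
    then have "f \<in> path_edges (y # zs)" using assms(2) 3 by auto
    then have "f \<subseteq> set (y # zs)" by (rule path_edges_subset)
    then show ?thesis using assms(1,3) 3 by auto
  qed (use 3 in auto)
qed (use assms in auto)

lemma path_edges_last:
  assumes "distinct xs" "f \<in> path_edges xs" "last xs \<in> f"
  shows "f = {xs ! (length xs - 2), last xs}"
proof -
  have "2 \<le> length xs"
    using assms(2) by (induction xs rule: path_edges.induct) auto
  moreover have "f = {hd (rev xs), rev xs ! 1}"
    using path_edges_hd[of "rev xs" f] assms by (simp add: path_edges_rev hd_rev)
  ultimately show ?thesis by (auto simp: hd_rev rev_nth numeral_2_eq_2)
qed

lemma finite_cycle_edges: "finite (cycle_edges xs)"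
proof -
  have "cycle_edges xs = (\<lambda>i. {xs ! i, xs ! (Suc i mod length xs)}) ` {..<length xs}"
    by (auto simp: cycle_edges_def)
  then show ?thesis by simp
qed

lemma cycle_edges_conv_path_edges:
  assumes "2 \<le> length xs"
  shows "cycle_edges xs = insert {last xs, hd xs} (path_edges xs)"
proof -
  have ne: "xs \<noteq> []" using assms by auto
  show ?thesis
  proof (intro equalityI subsetI)
    fix f assume "f \<in> cycle_edges xs"
    then obtain i where i: "i < length xs" "f = {xs ! i, xs ! (Suc i mod length xs)}"
      by (auto simp: cycle_edges_def)
    show "f \<in> insert {last xs, hd xs} (path_edges xs)"
    proof (cases "Suc i < length xs")
      case True then show ?thesis using i by (auto simp: path_edges_conv_nth)
    next
      case False
      then have "i = length xs - 1" using i by simp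
      then show ?thesis using i ne by (simp add: last_conv_nth hd_conv_nth)
    qed
  next
    fix f assume "f \<in> insert {last xs, hd xs} (path_edges xs)"
    then consider "f \<in> path_edges xs" | "f = {last xs, hd xs}" by auto
    then show "f \<in> cycle_edges xs"
    proof cases
      case 1
      then obtain i where "f = {xs ! i, xs ! Suc i}" "Suc i < length xs" by (auto simp: path_edges_conv_nth)
      then show ?thesis unfolding cycle_edges_def by (intro CollectI exI[of _ i]) auto
    next
      case 2
      then have "f = {xs ! (length xs - 1), xs ! (Suc (length xs - 1) mod length xs)}"
        using ne assms by (simp add: last_conv_nth hd_conv_nth)
      then show ?thesis unfolding cycle_edges_def using assms
        by (intro CollectI exI[of _ "length xs - 1"]) auto
    qed
  qed
qed

lemma cycle_edges_rotate1:
  assumes "2 \<le> length xs"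
  shows "cycle_edges (rotate1 xs) = cycle_edges xs"
proof (cases xs)
  case (Cons x ys)
  then have "ys \<noteq> []" using assms by auto
  then show ?thesis
    using Cons assms by (simp add: cycle_edges_conv_path_edges path_edges_append path_edges_Cons) blast
qed simp

lemma cycle_edges_rotate: "2 \<le> length xs \<Longrightarrow> cycle_edges (rotate k xs) = cycle_edges xs"
  by (induction k) (auto simp: cycle_edges_rotate1)

section \<open>Incompatible edges and the defect of an ordering\<close>

lemma incompatible_commute: "incompatible F f g \<longleftrightarrow> incompatible F g f"
  by (simp add: incompatible_def insert_commute)

lemma incompatibleE:
  assumes "incompatibility_system E F" "incompatible F f g"
  obtains v where "{f, g} \<in> F v" "f \<in> E" "g \<in> E" "f \<noteq> g" "f \<inter> g = {v}"
proof -
  obtain v where v: "{f, g} \<in> F v" using assms(2) by (auto simp: incompatible_def)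
  then have "\<exists>c d. {f, g} = {c, d} \<and> c \<in> E \<and> d \<in> E \<and> c \<noteq> d \<and> c \<inter> d = {v}"
    using assms(1) unfolding incompatibility_system_def by (elim allE ballE) auto
  then obtain c d where cd: "{f, g} = {c, d}" "c \<in> E" "d \<in> E" "c \<noteq> d" "c \<inter> d = {v}"
    by (elim exE conjE) auto
  then have "f = c \<and> g = d \<or> f = d \<and> g = c" by (auto simp: doubleton_eq_iff)
  then have "f \<in> E" "g \<in> E" "f \<noteq> g" "f \<inter> g = {v}" using cd by auto
  then show ?thesis using that v by blast
qed

lemma incompatible_at_common_vertex:
  assumes "incompatibility_system E F" "incompatible F f g" "v \<in> f" "v \<in> g"
  shows "f \<in> E" "g \<in> E" "f \<noteq> g" "{f, g} \<in> F v"
proof -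
  obtain x where "{f, g} \<in> F x" "f \<in> E" "g \<in> E" "f \<noteq> g" "f \<inter> g = {x}"
    using incompatibleE[OF assms(1,2)] .
  moreover have "v = x" using assms(3,4) \<open>f \<inter> g = {x}\<close> by blast
  ultimately show "f \<in> E" "g \<in> E" "f \<noteq> g" "{f, g} \<in> F v" by simp_all
qed

lemma card_incompatible_le:
  assumes sys: "incompatibility_system E F" and bnd: "bounded_system \<Delta> E F"
    and "finite E" "0 \<le> \<Delta>" "finite R"
    and inj: "inj_on g R" and v: "\<And>r. r \<in> R \<Longrightarrow> v \<in> g r" "v \<in> f"
    and S: "S \<subseteq> {r \<in> R. incompatible F f (g r)}"
  shows "real (card S) \<le> \<Delta>"
proof (cases "S = {}")
  case True then show ?thesis using \<open>0 \<le> \<Delta>\<close> by simp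
next
  case False
  then obtain r0 where "r0 \<in> R" "incompatible F f (g r0)" using S by auto
  then have "f \<in> E" using incompatible_at_common_vertex[OF sys] v by blast
  let ?T = "{e' \<in> E. e' \<noteq> f \<and> v \<in> e' \<and> {f, e'} \<in> F v}"
  have "g ` S \<subseteq> ?T"
    using S incompatible_at_common_vertex[OF sys] v by fastforce
  moreover have "inj_on g S" using inj by (rule inj_on_subset) (use S in auto)
  ultimately have "card S \<le> card ?T"
    using \<open>finite E\<close> by (metis (no_types, lifting) card_inj_on_le finite_subset mem_Collect_eq subsetI)
  moreover have "real (card ?T) \<le> \<Delta>" using bnd \<open>f \<in> E\<close> v unfolding bounded_system_def by blast
  ultimately show ?thesis by linarith
qed

definition conflict_vertices :: "('a \<Rightarrow> 'a set set set) \<Rightarrow> 'a list \<Rightarrow> 'a set" where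
  "conflict_vertices F xs = {x. \<exists>f\<in>cycle_edges xs. \<exists>g\<in>cycle_edges xs.
     f \<noteq> g \<and> x \<in> f \<and> x \<in> g \<and> incompatible F f g}"

definition defect :: "'a set set \<Rightarrow> ('a \<Rightarrow> 'a set set set) \<Rightarrow> 'a list \<Rightarrow> nat" where
  "defect E F xs = card (cycle_edges xs - E) + card (conflict_vertices F xs)"

lemma finite_conflict_vertices: "finite (conflict_vertices F xs)"
proof (rule finite_subset)
  show "conflict_vertices F xs \<subseteq> \<Union>(cycle_edges xs)" by (auto simp: conflict_vertices_def)
  show "finite (\<Union>(cycle_edges xs))" by (auto simp: finite_cycle_edges cycle_edges_def)
qed

lemma not_conflict_vertex:
  assumes "{f \<in> cycle_edges xs. x \<in> f} \<subseteq> {f1, f2}" "\<not> incompatible F f1 f2"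
  shows "x \<notin> conflict_vertices F xs"
proof
  assume "x \<in> conflict_vertices F xs"
  then obtain f g where fg: "f \<in> cycle_edges xs" "g \<in> cycle_edges xs" "f \<noteq> g" "x \<in> f" "x \<in> g"
    "incompatible F f g" by (auto simp: conflict_vertices_def)
  then have "f = f1 \<and> g = f2 \<or> f = f2 \<and> g = f1" using assms(1) by auto
  then show False using fg(6) assms(2) incompatible_commute by metis
qed

lemma conflict_vertex_cong:
  assumes "{f \<in> cycle_edges xs. x \<in> f} = {f \<in> cycle_edges ys. x \<in> f}"
  shows "x \<in> conflict_vertices F xs \<longleftrightarrow> x \<in> conflict_vertices F ys"
proof -
  have "\<And>f. f \<in> cycle_edges xs \<and> x \<in> f \<longleftrightarrow> f \<in> cycle_edges ys \<and> x \<in> f" using assms by blast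
  then show ?thesis unfolding conflict_vertices_def by blast
qed

lemma compatible_ham_cycle_if_defect_0:
  assumes "incompatibility_system E F" "distinct xs" "set xs = V" "3 \<le> length xs"
    and "defect E F xs = 0"
  shows "ham_cycle V E xs" "compatible_cycle F xs"
proof -
  have "cycle_edges xs \<subseteq> E" "conflict_vertices F xs = {}"
    using assms(5) finite_cycle_edges[of xs] finite_conflict_vertices[of F xs]
    by (auto simp: defect_def)
  then show "ham_cycle V E xs"
    using assms(2-4) unfolding ham_cycle_def cycle_edges_def by auto
  show "compatible_cycle F xs"
    unfolding compatible_cycle_def
  proof (intro ballI impI notI)
    fix f g assume fg: "f \<in> cycle_edges xs" "g \<in> cycle_edges xs" "f \<noteq> g" "incompatible F f g"
    then obtain x where "x \<in> f" "x \<in> g" using incompatibleE[OF assms(1)] by blast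
    then have "x \<in> conflict_vertices F xs" unfolding conflict_vertices_def using fg by blast
    then show False using \<open>conflict_vertices F xs = {}\<close> by blast
  qed
qed

lemma simple_graph_edgeE:
  assumes "simple_graph V E" "f \<in> E"
  obtains u v where "f = {u, v}" "u \<noteq> v" "u \<in> V" "v \<in> V"
  using assms unfolding simple_graph_def by blast

lemma simple_graph_edge_vertices:
  assumes "simple_graph V E" "{x, y} \<in> E"
  shows "x \<in> V" "y \<in> V" "x \<noteq> y"
proof -
  obtain u v where uv: "{x, y} = {u, v}" "u \<noteq> v" "u \<in> V" "v \<in> V"
    using simple_graph_edgeE[OF assms] .
  then have "x = u \<and> y = v \<or> x = v \<and> y = u" by (simp add: doubleton_eq_iff)
  then show "x \<in> V" "y \<in> V" "x \<noteq> y" using uv by auto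
qed

lemma simple_graph_edges_subset: "simple_graph V E \<Longrightarrow> E \<subseteq> {t. t \<subseteq> V \<and> card t = 2}"
  by (auto elim: simple_graph_edgeE)

lemma finite_two_subsets: "finite V \<Longrightarrow> finite {t. t \<subseteq> V \<and> card t = 2}"
  by (rule finite_subset[of _ "Pow V"]) auto

lemma simple_graph_finite_edges:
  assumes "simple_graph V E"
  shows "finite E"
proof (rule finite_subset[OF simple_graph_edges_subset[OF assms] finite_two_subsets])
  show "finite V" using assms by (simp add: simple_graph_def)
qed

definition non_edges :: "'a set \<Rightarrow> 'a set set \<Rightarrow> 'a set set" where
  "non_edges V E = {t. t \<subseteq> V \<and> card t = 2} - E"

lemma finite_non_edges: "finite V \<Longrightarrow> finite (non_edges V E)"
  unfolding non_edges_def using finite_two_subsets by blast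

lemma card_non_edges:
  assumes "simple_graph V E"
  shows "card (non_edges V E) = (card V choose 2) - card E"
proof -
  have fV: "finite V" using assms by (simp add: simple_graph_def)
  have sub: "E \<subseteq> {t. t \<subseteq> V \<and> card t = 2}" using simple_graph_edges_subset[OF assms] .
  have "finite E" using assms by (rule simple_graph_finite_edges)
  then have "card (non_edges V E) = card {t. t \<subseteq> V \<and> card t = 2} - card E"
    unfolding non_edges_def by (rule card_Diff_subset[OF _ sub])
  then show ?thesis using n_subsets[OF fV, of 2] by simp
qed

lemma card_ordered_non_edges_le:
  assumes "finite V"
  shows "card {(x, y). x \<in> V \<and> y \<in> V \<and> x \<noteq> y \<and> {x, y} \<notin> E} \<le> 2 * card (non_edges V E)"
proof -
  let ?P = "\<lambda>t. {(x, y). x \<in> t \<and> y \<in> t \<and> x \<noteq> y}"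
  have P2: "card (?P t) \<le> 2" if "card t = 2" for t :: "'a set"
  proof -
    obtain c d where "t = {c, d}" "c \<noteq> d" using \<open>card t = 2\<close> by (auto simp: card_2_iff)
    then have "?P t = {(c, d), (d, c)}" by auto
    then show ?thesis by (simp add: card_insert_le_m1)
  qed
  have "{(x, y). x \<in> V \<and> y \<in> V \<and> x \<noteq> y \<and> {x, y} \<notin> E} \<subseteq> (\<Union>t\<in>non_edges V E. ?P t)"
  proof safe
    fix x y assume xy: "x \<in> V" "y \<in> V" "x \<noteq> y" "{x, y} \<notin> E"
    then have "{x, y} \<in> non_edges V E" by (simp add: non_edges_def)
    moreover have "(x, y) \<in> ?P {x, y}" using xy by simp
    ultimately show "(x, y) \<in> (\<Union>t\<in>non_edges V E. ?P t)" by blast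
  qed
  moreover have "finite (\<Union>t\<in>non_edges V E. ?P t)"
    by (rule finite_subset[of _ "V \<times> V"]) (use assms in \<open>auto simp: non_edges_def\<close>)
  ultimately have "card {(x, y). x \<in> V \<and> y \<in> V \<and> x \<noteq> y \<and> {x, y} \<notin> E}
      \<le> card (\<Union>t\<in>non_edges V E. ?P t)" by (rule card_mono[rotated])
  also have "\<dots> \<le> (\<Sum>t\<in>non_edges V E. card (?P t))"
    by (rule card_UN_le[OF finite_non_edges[OF assms]])
  also have "\<dots> \<le> (\<Sum>t\<in>non_edges V E. 2)" by (rule sum_mono) (use P2 in \<open>auto simp: non_edges_def\<close>)
  finally show ?thesis by simp
qed

lemma card_le_degree_non_edges:
  assumes sg: "simple_graph V E" and v: "v \<in> V"
  shows "card V \<le> degree E v + card (non_edges V E) + 1"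
proof -
  let ?N = "{u. {u, v} \<in> E}"
  let ?Q = "(V - {v}) - ?N"
  have fV: "finite V" using sg by (simp add: simple_graph_def)
  have NV: "?N \<subseteq> V - {v}" using simple_graph_edge_vertices[OF sg] by blast
  have "inj_on (\<lambda>u. {u, v}) ?Q" by (rule inj_onI) (auto simp: doubleton_eq_iff)
  moreover have "(\<lambda>u. {u, v}) ` ?Q \<subseteq> non_edges V E" using v by (auto simp: non_edges_def)
  ultimately have cQ: "card ?Q \<le> card (non_edges V E)"
    using finite_non_edges[OF fV] by (intro card_inj_on_le)
  have "card (V - {v}) \<le> card (?Q \<union> ?N)" by (rule card_mono) (use fV NV in \<open>auto intro: finite_subset\<close>)
  also have "\<dots> \<le> card ?Q + card ?N" by (rule card_Un_le)
  finally show ?thesis using cQ v fV unfolding degree_def by simp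
qed

lemma degree_conv_positions:
  assumes "simple_graph V E" "distinct w" "set w = V"
  shows "degree E c = card {p. p < length w \<and> {c, w ! p} \<in> E}"
proof -
  let ?S = "{p. p < length w \<and> {c, w ! p} \<in> E}"
  have img: "(!) w ` ?S = {u. {u, c} \<in> E}"
  proof safe
    fix p assume "{c, w ! p} \<in> E" then show "{w ! p, c} \<in> E" by (simp add: insert_commute)
  next
    fix u assume u: "{u, c} \<in> E"
    then have "u \<in> set w" using simple_graph_edge_vertices[OF assms(1)] assms(3) by blast
    then obtain p where "p < length w" "w ! p = u" by (auto simp: in_set_conv_nth)
    then show "u \<in> (!) w ` ?S" using u by (auto simp: insert_commute)
  qed
  have "inj_on ((!) w) ?S" using assms(2) by (rule inj_on_nth) simp
  then show ?thesis unfolding degree_def img[symmetric] by (rule card_image)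
qed

lemma card_le_left_fibres:
  assumes "finite A" "finite B" "S \<subseteq> A \<times> B" "\<And>a. a \<in> A \<Longrightarrow> real (card {b. (a, b) \<in> S}) \<le> k"
  shows "real (card S) \<le> k * real (card A)"
proof -
  have S: "S = Sigma A (\<lambda>a. {b. (a, b) \<in> S})" using assms(3) by auto
  have fin: "\<forall>a\<in>A. finite {b. (a, b) \<in> S}"
  proof
    fix a show "finite {b. (a, b) \<in> S}" by (rule finite_subset[OF _ assms(2)]) (use assms(3) in auto)
  qed
  have "card S = (\<Sum>a\<in>A. card {b. (a, b) \<in> S})"
    by (subst S) (rule card_SigmaI[OF assms(1) fin])
  then have "real (card S) = (\<Sum>a\<in>A. real (card {b. (a, b) \<in> S}))" by simp
  also have "\<dots> \<le> (\<Sum>a\<in>A. k)" by (rule sum_mono) (rule assms(4))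
  finally show ?thesis by (simp add: mult.commute)
qed

lemma card_le_right_fibres:
  assumes "finite A" "finite B" "S \<subseteq> A \<times> B" "\<And>b. b \<in> B \<Longrightarrow> real (card {a. (a, b) \<in> S}) \<le> k"
  shows "real (card S) \<le> k * real (card B)"
proof -
  have "real (card (prod.swap ` S)) \<le> k * real (card B)"
  proof (rule card_le_left_fibres[OF assms(2,1)])
    show "prod.swap ` S \<subseteq> B \<times> A" using assms(3) by auto
    fix b assume "b \<in> B"
    have "{a. (b, a) \<in> prod.swap ` S} = {a. (a, b) \<in> S}" by force
    then show "real (card {a. (b, a) \<in> prod.swap ` S}) \<le> k" using assms(4)[OF \<open>b \<in> B\<close>] by simp
  qed
  then show ?thesis by (simp add: card_image)
qed

lemma card_Union_list_le: "card (\<Union>(set Bs)) \<le> sum_list (map card Bs)"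
proof (induction Bs)
  case (Cons B Bs)
  then show ?case using card_Un_le[of B "\<Union>(set Bs)"] by simp
qed simp

section \<open>The double switch\<close>

lemma hd_not_conflict_vertex:
  assumes "distinct P" "{f \<in> cycle_edges N. hd P \<in> f} \<subseteq> insert j (path_edges P)"
    and "\<not> incompatible F {hd P, P ! 1} j"
  shows "hd P \<notin> conflict_vertices F N"
proof (rule not_conflict_vertex[OF _ assms(3)])
  show "{f \<in> cycle_edges N. hd P \<in> f} \<subseteq> {{hd P, P ! 1}, j}"
    using assms(2) path_edges_hd[OF assms(1)] by blast
qed

lemma last_not_conflict_vertex:
  assumes "distinct P" "{f \<in> cycle_edges N. last P \<in> f} \<subseteq> insert j (path_edges P)"
    and "\<not> incompatible F {P ! (length P - 2), last P} j"
  shows "last P \<notin> conflict_vertices F N"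
proof (rule not_conflict_vertex[OF _ assms(3)])
  show "{f \<in> cycle_edges N. last P \<in> f} \<subseteq> {{P ! (length P - 2), last P}, j}"
    using assms(2) path_edges_last[OF assms(1)] by blast
qed

locale double_switch =
  fixes A B C :: "'a list" and u v y z :: 'a
  assumes distinct_old: "distinct (A @ [u] @ B @ [v] @ C)"
    and long: "2 \<le> length A" "2 \<le> length B" "2 \<le> length C"
    and ends: "{u, v} = {y, z}"
begin

abbreviation old :: "'a list" where "old \<equiv> A @ [u] @ B @ [v] @ C"
abbreviation new :: "'a list" where "new \<equiv> A @ rev B @ C @ [y, z]"

lemma nonempty: "A \<noteq> []" "B \<noteq> []" "C \<noteq> []"
  using long by auto

lemma set_new: "set new = set old"
proof -
  have "set new = {y, z} \<union> (set A \<union> set B \<union> set C)" by auto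
  also have "\<dots> = set old" using ends[symmetric] by auto
  finally show ?thesis .
qed

lemma distinct_new: "distinct new"
proof -
  have "length new = length old" by simp
  then show ?thesis using set_new distinct_old by (metis card_distinct distinct_card)
qed

lemma cycle_edges_old:
  "cycle_edges old = path_edges A \<union> path_edges B \<union> path_edges C \<union>
     {{last A, u}, {u, hd B}, {last B, v}, {v, hd C}, {last C, hd A}}"
proof -
  have path: "path_edges old = path_edges A \<union> path_edges B \<union> path_edges C \<union>
      {{last A, u}, {u, hd B}, {last B, v}, {v, hd C}}"
    using nonempty by (simp add: path_edges_append path_edges_Cons) blast
  have "cycle_edges old = insert {last C, hd A} (path_edges old)"
    using nonempty by (subst cycle_edges_conv_path_edges) simp_all
  then show ?thesis unfolding path by (simp add: insert_commute)
qed

lemma cycle_edges_new: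
  "cycle_edges new = path_edges A \<union> path_edges B \<union> path_edges C \<union>
     {{last A, last B}, {hd B, hd C}, {last C, y}, {y, z}, {z, hd A}}"
proof -
  have path: "path_edges new = path_edges A \<union> path_edges B \<union> path_edges C \<union>
      {{last A, last B}, {hd B, hd C}, {last C, y}, {y, z}}"
    using nonempty by (simp add: path_edges_append path_edges_rev hd_rev last_rev path_edges_Cons) blast
  have "cycle_edges new = insert {z, hd A} (path_edges new)"
    using nonempty by (subst cycle_edges_conv_path_edges) simp_all
  then show ?thesis unfolding path by (simp add: insert_commute)
qed

lemma kept_cycle_edge:
  assumes "f \<in> cycle_edges old" "f \<notin> {{last A, u}, {u, hd B}, {last B, v}, {v, hd C}, {last C, hd A}}"
  shows "f \<in> cycle_edges new"
proof -
  have "f \<in> path_edges A \<union> path_edges B \<union> path_edges C"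
    using assms unfolding cycle_edges_old by blast
  then show ?thesis unfolding cycle_edges_new by blast
qed

lemma disjoint_segments:
  "set A \<inter> set B = {}" "set A \<inter> set C = {}" "set B \<inter> set C = {}"
  "y \<notin> set A" "y \<notin> set B" "y \<notin> set C" "z \<notin> set A" "z \<notin> set B" "z \<notin> set C" "y \<noteq> z"
  using distinct_old ends by (auto simp: doubleton_eq_iff)

lemma switch_vertices_distinct: "distinct [hd A, last A, hd B, last B, hd C, last C, y, z]"
proof -
  have "hd P \<noteq> last P" if "distinct P" "2 \<le> length P" for P :: "'a list"
    using that by (cases P) (auto simp: last_conv_nth nth_eq_iff_index_eq)
  then have "hd A \<noteq> last A" "hd B \<noteq> last B" "hd C \<noteq> last C" using distinct_old long by auto
  moreover have "hd A \<in> set A" "last A \<in> set A" "hd B \<in> set B" "last B \<in> set B"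
    "hd C \<in> set C" "last C \<in> set C" using nonempty by auto
  ultimately show ?thesis using disjoint_segments by auto
qed

lemma non_edges_new_subset:
  assumes "{last A, last B} \<in> E" "{hd B, hd C} \<in> E" "{last C, y} \<in> E" "{y, z} \<in> E" "{z, hd A} \<in> E"
  shows "cycle_edges new - E \<subseteq> cycle_edges old - E - {{last C, hd A}}"
proof
  fix f assume f: "f \<in> cycle_edges new - E"
  then have "f \<in> path_edges A \<union> path_edges B \<union> path_edges C"
    using assms unfolding cycle_edges_new by auto
  moreover have "{last C, hd A} \<notin> path_edges A \<union> path_edges B \<union> path_edges C"
  proof -
    have "last C \<in> set C" "hd A \<in> set A" using nonempty by auto
    then show ?thesis using path_edges_subset disjoint_segments(1-3) by blast
  qed
  ultimately show "f \<in> cycle_edges old - E - {{last C, hd A}}"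
    using f unfolding cycle_edges_old by blast
qed

lemma switch_vertices_outside_segments:
  "hd A \<notin> set B" "hd A \<notin> set C" "last A \<notin> set B" "last A \<notin> set C"
  "hd B \<notin> set A" "hd B \<notin> set C" "last B \<notin> set A" "last B \<notin> set C"
  "hd C \<notin> set A" "hd C \<notin> set B" "last C \<notin> set A" "last C \<notin> set B"
  using nonempty disjoint_segments(1-3) by (meson disjoint_iff hd_in_set last_in_set)+

lemma edges_at_switch_vertices:
  "{f \<in> cycle_edges new. hd A \<in> f} \<subseteq> insert {z, hd A} (path_edges A)"
  "{f \<in> cycle_edges new. last A \<in> f} \<subseteq> insert {last A, last B} (path_edges A)"
  "{f \<in> cycle_edges new. hd B \<in> f} \<subseteq> insert {hd B, hd C} (path_edges B)"
  "{f \<in> cycle_edges new. last B \<in> f} \<subseteq> insert {last A, last B} (path_edges B)"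
  "{f \<in> cycle_edges new. hd C \<in> f} \<subseteq> insert {hd B, hd C} (path_edges C)"
  "{f \<in> cycle_edges new. last C \<in> f} \<subseteq> insert {last C, y} (path_edges C)"
  "{f \<in> cycle_edges new. y \<in> f} \<subseteq> {{last C, y}, {y, z}}"
  "{f \<in> cycle_edges new. z \<in> f} \<subseteq> {{y, z}, {z, hd A}}"
  using switch_vertices_outside_segments disjoint_segments(4-9) switch_vertices_distinct
  unfolding cycle_edges_new by (auto dest: not_mem_path_edge)

lemma edges_at_unmoved_vertex:
  assumes "x \<notin> {hd A, last A, hd B, last B, hd C, last C, y, z}"
  shows "{f \<in> cycle_edges new. x \<in> f} = {f \<in> cycle_edges old. x \<in> f}"
proof -
  have "x \<noteq> u" "x \<noteq> v" using assms ends by (auto simp: doubleton_eq_iff)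
  then have "{f \<in> cycle_edges new. x \<in> f} = {f \<in> path_edges A \<union> path_edges B \<union> path_edges C. x \<in> f}"
    "{f \<in> cycle_edges old. x \<in> f} = {f \<in> path_edges A \<union> path_edges B \<union> path_edges C. x \<in> f}"
    using assms unfolding cycle_edges_new cycle_edges_old by auto
  then show ?thesis by simp
qed

lemma conflict_vertices_new_subset:
  assumes "\<not> incompatible F {hd A, A ! 1} {z, hd A}"
    and "\<not> incompatible F {A ! (length A - 2), last A} {last A, last B}"
    and "\<not> incompatible F {hd B, B ! 1} {hd B, hd C}"
    and "\<not> incompatible F {B ! (length B - 2), last B} {last A, last B}"
    and "\<not> incompatible F {hd C, C ! 1} {hd B, hd C}"
    and "\<not> incompatible F {C ! (length C - 2), last C} {last C, y}"
    and "\<not> incompatible F {last C, y} {y, z}"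
    and "\<not> incompatible F {y, z} {z, hd A}"
  shows "conflict_vertices F new \<subseteq> conflict_vertices F old - {hd A, last A, hd B, last B, hd C, last C, y, z}"
proof -
  have dA: "distinct A" and dB: "distinct B" and dC: "distinct C" using distinct_old by auto
  note at = edges_at_switch_vertices
  have "hd A \<notin> conflict_vertices F new" by (rule hd_not_conflict_vertex[OF dA at(1) assms(1)])
  moreover have "last A \<notin> conflict_vertices F new" by (rule last_not_conflict_vertex[OF dA at(2) assms(2)])
  moreover have "hd B \<notin> conflict_vertices F new" by (rule hd_not_conflict_vertex[OF dB at(3) assms(3)])
  moreover have "last B \<notin> conflict_vertices F new" by (rule last_not_conflict_vertex[OF dB at(4) assms(4)])
  moreover have "hd C \<notin> conflict_vertices F new" by (rule hd_not_conflict_vertex[OF dC at(5) assms(5)])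
  moreover have "last C \<notin> conflict_vertices F new" by (rule last_not_conflict_vertex[OF dC at(6) assms(6)])
  moreover have "y \<notin> conflict_vertices F new" by (rule not_conflict_vertex[OF at(7) assms(7)])
  moreover have "z \<notin> conflict_vertices F new" by (rule not_conflict_vertex[OF at(8) assms(8)])
  ultimately have moved: "{hd A, last A, hd B, last B, hd C, last C, y, z} \<inter> conflict_vertices F new = {}"
    by auto
  show ?thesis
  proof
    fix x assume x: "x \<in> conflict_vertices F new"
    then have "x \<notin> {hd A, last A, hd B, last B, hd C, last C, y, z}" using moved by blast
    then show "x \<in> conflict_vertices F old - {hd A, last A, hd B, last B, hd C, last C, y, z}"
      using x conflict_vertex_cong[OF edges_at_unmoved_vertex] by blast
  qed
qed

lemma defect_new_less:
  assumes "{last A, last B} \<in> E" "{hd B, hd C} \<in> E" "{last C, y} \<in> E" "{y, z} \<in> E" "{z, hd A} \<in> E"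
    and "\<not> incompatible F {hd A, A ! 1} {z, hd A}"
    and "\<not> incompatible F {A ! (length A - 2), last A} {last A, last B}"
    and "\<not> incompatible F {hd B, B ! 1} {hd B, hd C}"
    and "\<not> incompatible F {B ! (length B - 2), last B} {last A, last B}"
    and "\<not> incompatible F {hd C, C ! 1} {hd B, hd C}"
    and "\<not> incompatible F {C ! (length C - 2), last C} {last C, y}"
    and "\<not> incompatible F {last C, y} {y, z}"
    and "\<not> incompatible F {y, z} {z, hd A}"
    and "{last C, hd A} \<notin> E \<or> hd A \<in> conflict_vertices F old \<or> last C \<in> conflict_vertices F old"
  shows "defect E F new < defect E F old"
proof -
  note edges = non_edges_new_subset[OF assms(1-5)]
  note conflicts = conflict_vertices_new_subset[OF assms(6-13)]
  have fin: "finite (cycle_edges old - E)" using finite_cycle_edges by blast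
  have "card (cycle_edges new - E) < card (cycle_edges old - E) \<and>
      card (conflict_vertices F new) \<le> card (conflict_vertices F old) \<or>
      card (cycle_edges new - E) \<le> card (cycle_edges old - E) \<and>
      card (conflict_vertices F new) < card (conflict_vertices F old)"
  proof (cases "{last C, hd A} \<in> E")
    case False
    then have "{last C, hd A} \<in> cycle_edges old - E" unfolding cycle_edges_old by blast
    then have "cycle_edges new - E \<subset> cycle_edges old - E" using edges by blast
    then show ?thesis using conflicts
      by (intro disjI1 conjI psubset_card_mono[OF fin] card_mono[OF finite_conflict_vertices]) auto
  next
    case True
    then have "conflict_vertices F new \<subset> conflict_vertices F old" using assms(14) conflicts by blast
    then show ?thesis using edges
      by (intro disjI2 conjI psubset_card_mono[OF finite_conflict_vertices] card_mono[OF fin]) auto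
  qed
  then show ?thesis unfolding defect_def by linarith
qed

end

lemma segment_ends:
  assumes "i + 2 \<le> j" "j \<le> length w"
  shows "length (drop i (take j w)) = j - i"
    and "hd (drop i (take j w)) = w ! i" "drop i (take j w) ! 1 = w ! (i + 1)"
    and "last (drop i (take j w)) = w ! (j - 1)"
    and "drop i (take j w) ! (length (drop i (take j w)) - 2) = w ! (j - 2)"
proof -
  let ?P = "drop i (take j w)"
  show len: "length ?P = j - i" using assms by simp
  have nth: "?P ! k = w ! (i + k)" if "k < j - i" for k using that assms by simp
  have "?P \<noteq> []" using len assms by auto
  then show "hd ?P = w ! i" "?P ! 1 = w ! (i + 1)" "last ?P = w ! (j - 1)"
    "?P ! (length ?P - 2) = w ! (j - 2)"
    using nth[of 0] nth[of 1] nth[of "j - i - 1"] nth[of "j - i - 2"] assms len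
    by (auto simp: hd_conv_nth last_conv_nth)
qed

lemma split_at_two_positions:
  assumes "lo < hi" "hi < length w"
  shows "w = take lo w @ [w ! lo] @ drop (Suc lo) (take hi w) @ [w ! hi] @ drop (Suc hi) w"
proof -
  have "lo < length (take hi w)" using assms by simp
  then have "take hi w = take lo (take hi w) @ take hi w ! lo # drop (Suc lo) (take hi w)"
    by (rule id_take_nth_drop)
  then have front: "take hi w = take lo w @ [w ! lo] @ drop (Suc lo) (take hi w)"
    using assms(1) by (simp add: min_def)
  have "w = take hi w @ [w ! hi] @ drop (Suc hi) w"
    using assms(2) by (simp add: Cons_nth_drop_Suc)
  then show ?thesis by (subst (asm) front) (simp only: append_assoc)
qed

definition switchable :: "'a set set \<Rightarrow> ('a \<Rightarrow> 'a set set set) \<Rightarrow> 'a list \<Rightarrow> nat \<Rightarrow> nat \<Rightarrow> bool" where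
  "switchable E F w p r \<longleftrightarrow>
     {w ! (p - 1), w ! (r - 1)} \<in> E \<and> {w ! (p + 1), w ! (r + 1)} \<in> E \<and>
     \<not> incompatible F {w ! (p - 2), w ! (p - 1)} {w ! (p - 1), w ! (r - 1)} \<and>
     \<not> incompatible F {w ! (r - 2), w ! (r - 1)} {w ! (r - 1), w ! (p - 1)} \<and>
     \<not> incompatible F {w ! (p + 1), w ! (p + 2)} {w ! (p + 1), w ! (r + 1)} \<and>
     \<not> incompatible F {w ! (r + 1), w ! (r + 2)} {w ! (r + 1), w ! (p + 1)}"

lemma switchable_commute: "switchable E F w p r \<longleftrightarrow> switchable E F w r p"
  unfolding switchable_def by (auto simp: insert_commute)

lemma switch_at_positions:
  assumes w: "distinct w" "length w = n" and pos: "2 \<le> lo" "lo + 3 \<le> hi" "hi + 3 \<le> n"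
    and sw: "switchable E F w lo hi" and yz: "{y, z} = {w ! lo, w ! hi}"
    and E: "{w ! (n - 1), y} \<in> E" "{y, z} \<in> E" "{z, w ! 0} \<in> E"
    and compat: "\<not> incompatible F {w ! (n - 2), w ! (n - 1)} {w ! (n - 1), y}"
      "\<not> incompatible F {w ! (n - 1), y} {y, z}" "\<not> incompatible F {y, z} {z, w ! 0}"
      "\<not> incompatible F {w ! 0, w ! 1} {z, w ! 0}"
    and e: "e \<in> cycle_edges w" "e \<noteq> {w ! (n - 1), w ! 0}" "w ! lo \<notin> e" "w ! hi \<notin> e"
    and defective: "{w ! (n - 1), w ! 0} \<notin> E \<or> w ! 0 \<in> conflict_vertices F w \<or>
      w ! (n - 1) \<in> conflict_vertices F w"
  shows "\<exists>N. distinct N \<and> set N = set w \<and> e \<in> cycle_edges N \<and> defect E F N < defect E F w"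
proof -
  define A where "A = take lo w"
  define B where "B = drop (Suc lo) (take hi w)"
  define C where "C = drop (Suc hi) (take n w)"
  have w_split: "w = A @ [w ! lo] @ B @ [w ! hi] @ C"
    using split_at_two_positions[of lo hi w] pos w unfolding A_def B_def C_def by simp
  note segA = segment_ends[of 0 lo w, unfolded drop_0, folded A_def]
    and segB = segment_ends[of "Suc lo" hi w, folded B_def]
    and segC = segment_ends[of "Suc hi" n w, folded C_def]
  have seg: "hd A = w ! 0" "A ! 1 = w ! 1" "last A = w ! (lo - 1)" "A ! (length A - 2) = w ! (lo - 2)"
    "hd B = w ! (lo + 1)" "B ! 1 = w ! (lo + 2)" "last B = w ! (hi - 1)" "B ! (length B - 2) = w ! (hi - 2)"
    "hd C = w ! (hi + 1)" "C ! 1 = w ! (hi + 2)" "last C = w ! (n - 1)" "C ! (length C - 2) = w ! (n - 2)"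
    using segA segB segC pos w by (simp_all add: numeral_2_eq_2)
  interpret double_switch A B C "w ! lo" "w ! hi" y z
  proof
    show "distinct (A @ [w ! lo] @ B @ [w ! hi] @ C)" using w_split w(1) by simp
    show "2 \<le> length A" "2 \<le> length B" "2 \<le> length C" using segA(1) segB(1) segC(1) pos w by auto
  qed (use yz in simp)
  have "defect E F (A @ rev B @ C @ [y, z]) < defect E F (A @ [w ! lo] @ B @ [w ! hi] @ C)"
  proof (rule defect_new_less)
    show "{last A, last B} \<in> E" "{hd B, hd C} \<in> E" "{last C, y} \<in> E" "{y, z} \<in> E" "{z, hd A} \<in> E"
      using sw E unfolding switchable_def seg by simp_all
    show "\<not> incompatible F {hd A, A ! 1} {z, hd A}"
      "\<not> incompatible F {A ! (length A - 2), last A} {last A, last B}"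
      "\<not> incompatible F {hd B, B ! 1} {hd B, hd C}"
      "\<not> incompatible F {B ! (length B - 2), last B} {last A, last B}"
      "\<not> incompatible F {hd C, C ! 1} {hd B, hd C}"
      "\<not> incompatible F {C ! (length C - 2), last C} {last C, y}"
      "\<not> incompatible F {last C, y} {y, z}" "\<not> incompatible F {y, z} {z, hd A}"
      using sw compat unfolding switchable_def seg by (simp_all add: insert_commute)
    show "{last C, hd A} \<notin> E \<or> hd A \<in> conflict_vertices F (A @ [w ! lo] @ B @ [w ! hi] @ C) \<or>
        last C \<in> conflict_vertices F (A @ [w ! lo] @ B @ [w ! hi] @ C)"
      using defective w_split unfolding seg by simp
  qed
  moreover have "e \<in> cycle_edges (A @ rev B @ C @ [y, z])"
    using kept_cycle_edge e w_split unfolding seg by auto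
  ultimately show ?thesis using distinct_new set_new w_split by metis
qed

section \<open>Counting switching positions\<close>

lemma inj_on_insert_nth:
  assumes "distinct w" "inj_on h R" "\<And>r. r \<in> R \<Longrightarrow> h r < length w"
  shows "inj_on (\<lambda>r. {x, w ! h r}) R"
proof (rule inj_onI)
  fix p q assume pq: "p \<in> R" "q \<in> R" "{x, w ! h p} = {x, w ! h q}"
  then have "w ! h p = w ! h q" by (auto simp: doubleton_eq_iff)
  then have "h p = h q" using assms pq by (simp add: nth_eq_iff_index_eq)
  then show "p = q" using assms(2) pq by (meson inj_onD)
qed

lemma card_incompatible_pairs_left:
  assumes sys: "incompatibility_system E F" and bnd: "bounded_system \<Delta> E F"
    and fin: "finite E" "0 \<le> \<Delta>" "finite P" "finite R"
    and inj: "\<And>p. p \<in> P \<Longrightarrow> inj_on (g p) R"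
    and v: "\<And>p r. p \<in> P \<Longrightarrow> r \<in> R \<Longrightarrow> v p \<in> g p r" "\<And>p. p \<in> P \<Longrightarrow> v p \<in> f p"
  shows "real (card {(p, r) \<in> P \<times> R. incompatible F (f p) (g p r)}) \<le> \<Delta> * real (card P)"
proof (rule card_le_left_fibres[OF fin(3,4)])
  fix p assume p: "p \<in> P"
  show "real (card {r. (p, r) \<in> {(p, r) \<in> P \<times> R. incompatible F (f p) (g p r)}}) \<le> \<Delta>"
    by (rule card_incompatible_le[OF sys bnd fin(1,2,4) inj[OF p] v(1)[OF p] v(2)[OF p]]) auto
qed auto

lemma card_incompatible_pairs_right:
  assumes sys: "incompatibility_system E F" and bnd: "bounded_system \<Delta> E F"
    and fin: "finite E" "0 \<le> \<Delta>" "finite P" "finite R"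
    and inj: "\<And>r. r \<in> R \<Longrightarrow> inj_on (g r) P"
    and v: "\<And>p r. p \<in> P \<Longrightarrow> r \<in> R \<Longrightarrow> v r \<in> g r p" "\<And>r. r \<in> R \<Longrightarrow> v r \<in> f r"
  shows "real (card {(p, r) \<in> P \<times> R. incompatible F (f r) (g r p)}) \<le> \<Delta> * real (card R)"
proof (rule card_le_right_fibres[OF fin(3,4)])
  fix r assume r: "r \<in> R"
  show "real (card {p. (p, r) \<in> {(p, r) \<in> P \<times> R. incompatible F (f r) (g r p)}}) \<le> \<Delta>"
    by (rule card_incompatible_le[OF sys bnd fin(1,2,3) inj[OF r] v(1)[OF _ r] v(2)[OF r]]) auto
qed auto

lemma card_non_edge_pairs_le:
  assumes "distinct w" "set w = V" "inj_on h I" "\<And>i. i \<in> I \<Longrightarrow> h i < length w" "finite I"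
  shows "card {(p, r). p \<in> I \<and> r \<in> I \<and> p \<noteq> r \<and> {w ! h p, w ! h r} \<notin> E}
    \<le> card {(x, y). x \<in> V \<and> y \<in> V \<and> x \<noteq> y \<and> {x, y} \<notin> E}"
proof (rule card_inj_on_le)
  have nth: "w ! h p = w ! h r \<longleftrightarrow> p = r" if "p \<in> I" "r \<in> I" for p r
    using assms(1,3,4) that by (auto simp: nth_eq_iff_index_eq inj_on_eq_iff)
  show "inj_on (\<lambda>(p, r). (w ! h p, w ! h r)) {(p, r). p \<in> I \<and> r \<in> I \<and> p \<noteq> r \<and> {w ! h p, w ! h r} \<notin> E}"
    by (rule inj_onI) (auto simp: nth)
  show "(\<lambda>(p, r). (w ! h p, w ! h r)) ` {(p, r). p \<in> I \<and> r \<in> I \<and> p \<noteq> r \<and> {w ! h p, w ! h r} \<notin> E}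
      \<subseteq> {(x, y). x \<in> V \<and> y \<in> V \<and> x \<noteq> y \<and> {x, y} \<notin> E}"
    using assms(2,4) by (auto simp: nth)
  show "finite {(x, y). x \<in> V \<and> y \<in> V \<and> x \<noteq> y \<and> {x, y} \<notin> E}"
    by (rule finite_subset[of _ "V \<times> V"]) (use assms(2) in auto)
qed

definition admissible_positions ::
  "'a set set \<Rightarrow> ('a \<Rightarrow> 'a set set set) \<Rightarrow> 'a list \<Rightarrow> 'a \<Rightarrow> 'a set \<Rightarrow> 'a set \<Rightarrow> nat set" where
  "admissible_positions E F w c f e = {p. 2 \<le> p \<and> p + 3 \<le> length w \<and> {c, w ! p} \<in> E \<and>
     \<not> incompatible F f {c, w ! p} \<and> w ! p \<notin> e}"

lemma finite_admissible_positions: "finite (admissible_positions E F w c f e)"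
  by (rule finite_subset[of _ "{..<length w}"]) (auto simp: admissible_positions_def)

lemma degree_le_card_admissible_positions:
  assumes sg: "simple_graph V E" and sys: "incompatibility_system E F" and bnd: "bounded_system \<Delta> E F"
    and "0 \<le> \<Delta>" and w: "distinct w" "set w = V" and "c \<in> f" "card e = 2"
  shows "real (degree E c) \<le> real (card (admissible_positions E F w c f e)) + 6 + \<Delta>"
proof -
  let ?n = "length w"
  let ?G = "admissible_positions E F w c f e"
  let ?T = "{p \<in> {..<?n}. incompatible F f {c, w ! p}}"
  let ?e = "{p \<in> {..<?n}. w ! p \<in> e}"
  have "finite E" using sg by (rule simple_graph_finite_edges)
  have "{p. p < ?n \<and> {c, w ! p} \<in> E} \<subseteq> \<Union>(set [?G, {0, 1, ?n - 2, ?n - 1}, ?T, ?e])"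
    unfolding admissible_positions_def by auto
  then have "degree E c \<le> card (\<Union>(set [?G, {0, 1, ?n - 2, ?n - 1}, ?T, ?e]))"
    unfolding degree_conv_positions[OF sg w]
    by (rule card_mono[rotated]) (auto simp: finite_admissible_positions)
  also have "\<dots> \<le> card ?G + card {0, 1, ?n - 2, ?n - 1} + card ?T + card ?e"
    using card_Union_list_le[of "[?G, {0, 1, ?n - 2, ?n - 1}, ?T, ?e]"] by simp
  finally have deg: "degree E c \<le> card ?G + card {0, 1, ?n - 2, ?n - 1} + card ?T + card ?e" .
  have "card {0, 1, ?n - 2, ?n - 1} \<le> 4" by (simp add: card_insert_le_m1)
  moreover have "card ?e \<le> 2"
  proof -
    have "inj_on ((!) w) ?e" using w(1) by (rule inj_on_nth) simp
    moreover have "finite e" using \<open>card e = 2\<close> card.infinite by force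
    ultimately have "card ?e \<le> card e" by (intro card_inj_on_le) auto
    then show ?thesis using \<open>card e = 2\<close> by simp
  qed
  moreover have "real (card ?T) \<le> \<Delta>"
  proof (rule card_incompatible_le[OF sys bnd \<open>finite E\<close> \<open>0 \<le> \<Delta>\<close> _ _ _ \<open>c \<in> f\<close>])
    show "inj_on (\<lambda>p. {c, w ! id p}) {..<?n}" by (rule inj_on_insert_nth[OF w(1)]) auto
  qed auto
  ultimately show ?thesis using deg by linarith
qed

lemma card_bad_chord_pairs:
  assumes w: "distinct w" "set w = V" and fin: "finite P" "finite R"
    and pos: "\<forall>p\<in>P \<union> R. 2 \<le> p \<and> p + 3 \<le> length w"
  shows "real (card {(p, r) \<in> P \<times> R. \<not> (p + 3 \<le> r \<or> r + 3 \<le> p) \<or> {w ! p, w ! r} \<notin> E \<or>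
      {w ! (p - 1), w ! (r - 1)} \<notin> E \<or> {w ! (p + 1), w ! (r + 1)} \<notin> E})
    \<le> 5 * real (card P) + 3 * real (card {(x, y). x \<in> V \<and> y \<in> V \<and> x \<noteq> y \<and> {x, y} \<notin> E})"
proof -
  have bounds: "1 \<le> p" "p - 1 < length w" "p < length w" "Suc p < length w" if "p \<in> P \<union> R" for p
    using bspec[OF pos that] by auto
  let ?NE = "{(x, y). x \<in> V \<and> y \<in> V \<and> x \<noteq> y \<and> {x, y} \<notin> E}"
  let ?close = "{(p, r) \<in> P \<times> R. p \<le> r + 2 \<and> r \<le> p + 2}"
  let ?B = "\<lambda>h. {(p, r). p \<in> P \<union> R \<and> r \<in> P \<union> R \<and> p \<noteq> r \<and> {w ! h p, w ! h r} \<notin> E}"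
  have finB: "finite (?B h)" for h
    by (rule finite_subset[of _ "(P \<union> R) \<times> (P \<union> R)"]) (use fin in auto)
  have B: "card (?B h) \<le> card ?NE" if "inj_on h (P \<union> R)" "\<And>p. p \<in> P \<union> R \<Longrightarrow> h p < length w" for h
    by (rule card_non_edge_pairs_le[OF w that finite_UnI[OF fin]])
  have "inj_on (\<lambda>p. p - 1) (P \<union> R)"
  proof (rule inj_onI)
    fix p q assume pq: "p \<in> P \<union> R" "q \<in> P \<union> R" "p - 1 = q - 1"
    then show "p = q" using bounds(1)[OF pq(1)] bounds(1)[OF pq(2)] by simp
  qed
  then have "card (?B (\<lambda>p. p - 1)) \<le> card ?NE" by (rule B) (use bounds in simp)
  moreover have "card (?B id) \<le> card ?NE" "card (?B Suc) \<le> card ?NE" by (rule B; use bounds in simp)+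
  ultimately have B3: "card (?B id) + card (?B (\<lambda>p. p - 1)) + card (?B Suc) \<le> 3 * card ?NE"
    by linarith
  have fin_close: "finite ?close" by (rule finite_subset[of _ "P \<times> R"]) (use fin in auto)
  have close: "real (card ?close) \<le> 5 * real (card P)"
  proof (rule card_le_left_fibres[OF fin])
    fix p assume "p \<in> P"
    have "{r. (p, r) \<in> ?close} \<subseteq> {p - 2..p + 2}" by auto
    then have "card {r. (p, r) \<in> ?close} \<le> card {p - 2..p + 2}" by (rule card_mono[rotated]) auto
    then show "real (card {r. (p, r) \<in> ?close}) \<le> 5" by simp
  qed auto
  have "{(p, r) \<in> P \<times> R. \<not> (p + 3 \<le> r \<or> r + 3 \<le> p) \<or> {w ! p, w ! r} \<notin> E \<or>
      {w ! (p - 1), w ! (r - 1)} \<notin> E \<or> {w ! (p + 1), w ! (r + 1)} \<notin> E}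
      \<subseteq> \<Union>(set [?close, ?B id, ?B (\<lambda>p. p - 1), ?B Suc])"
    by (clarsimp simp: not_le) linarith
  then have "card {(p, r) \<in> P \<times> R. \<not> (p + 3 \<le> r \<or> r + 3 \<le> p) \<or> {w ! p, w ! r} \<notin> E \<or>
      {w ! (p - 1), w ! (r - 1)} \<notin> E \<or> {w ! (p + 1), w ! (r + 1)} \<notin> E}
      \<le> card (\<Union>(set [?close, ?B id, ?B (\<lambda>p. p - 1), ?B Suc]))"
    by (rule card_mono[rotated]) (use finB fin_close in simp)
  also have "\<dots> \<le> card ?close + card (?B id) + card (?B (\<lambda>p. p - 1)) + card (?B Suc)"
    using card_Union_list_le[of "[?close, ?B id, ?B (\<lambda>p. p - 1), ?B Suc]"] by simp
  finally show ?thesis using B3 close by linarith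
qed

lemma inj_on_insert_nth_shifts:
  assumes "distinct w" "\<forall>r\<in>X. 1 \<le> r \<and> r + 1 < length w"
  shows "inj_on (\<lambda>r. {x, w ! r}) X" "inj_on (\<lambda>r. {x, w ! (r - 1)}) X"
    "inj_on (\<lambda>r. {x, w ! (r + 1)}) X"
proof -
  have r: "1 \<le> r" "r - 1 < length w" "id r < length w" "r + 1 < length w" if "r \<in> X" for r
    using bspec[OF assms(2) that] by auto
  have "inj_on (\<lambda>r. r - 1) X"
  proof (rule inj_onI)
    fix p q assume "p \<in> X" "q \<in> X" "p - 1 = q - 1"
    then show "p = q" using r(1)[of p] r(1)[of q] by simp
  qed
  then show "inj_on (\<lambda>r. {x, w ! (r - 1)}) X"
    by (rule inj_on_insert_nth[OF assms(1)]) (rule r(2))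
  have "inj_on (\<lambda>r. {x, w ! id r}) X" by (rule inj_on_insert_nth[OF assms(1) inj_on_id]) (rule r(3))
  then show "inj_on (\<lambda>r. {x, w ! r}) X" by simp
  have "inj_on (\<lambda>r. r + 1) X" by (simp add: inj_on_def)
  then show "inj_on (\<lambda>r. {x, w ! (r + 1)}) X"
    by (rule inj_on_insert_nth[OF assms(1)]) (rule r(4))
qed

lemma card_incompatible_pairs:
  assumes sys: "incompatibility_system E F" and bnd: "bounded_system \<Delta> E F"
    and "finite E" "0 \<le> \<Delta>" and w: "distinct w" and fin: "finite P" "finite R"
    and pos: "\<forall>p\<in>P \<union> R. 2 \<le> p \<and> p + 3 \<le> length w"
  shows "real (card {(p, r) \<in> P \<times> R.
      incompatible F {w ! (length w - 1), w ! p} {w ! p, w ! r} \<or>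
      incompatible F {w ! (p - 2), w ! (p - 1)} {w ! (p - 1), w ! (r - 1)} \<or>
      incompatible F {w ! (p + 1), w ! (p + 2)} {w ! (p + 1), w ! (r + 1)} \<or>
      incompatible F {w ! r, w ! 0} {w ! r, w ! p} \<or>
      incompatible F {w ! (r - 2), w ! (r - 1)} {w ! (r - 1), w ! (p - 1)} \<or>
      incompatible F {w ! (r + 1), w ! (r + 2)} {w ! (r + 1), w ! (p + 1)}})
    \<le> 3 * \<Delta> * real (card P) + 3 * \<Delta> * real (card R)"
    (is "real (card ?S) \<le> _")
proof -
  have "\<forall>r\<in>X. 1 \<le> r \<and> r + 1 < length w" if "X \<subseteq> P \<union> R" for X
  proof
    fix r assume "r \<in> X"
    then have "2 \<le> r \<and> r + 3 \<le> length w" using pos that by blast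
    then show "1 \<le> r \<and> r + 1 < length w" by auto
  qed
  note inj = inj_on_insert_nth_shifts[OF w this]
  note left = card_incompatible_pairs_left[OF sys bnd \<open>finite E\<close> \<open>0 \<le> \<Delta>\<close> fin]
    and right = card_incompatible_pairs_right[OF sys bnd \<open>finite E\<close> \<open>0 \<le> \<Delta>\<close> fin]
  let ?S1 = "{(p, r) \<in> P \<times> R. incompatible F {w ! (length w - 1), w ! p} {w ! p, w ! r}}"
  let ?S2 = "{(p, r) \<in> P \<times> R. incompatible F {w ! (p - 2), w ! (p - 1)} {w ! (p - 1), w ! (r - 1)}}"
  let ?S3 = "{(p, r) \<in> P \<times> R. incompatible F {w ! (p + 1), w ! (p + 2)} {w ! (p + 1), w ! (r + 1)}}"
  let ?S4 = "{(p, r) \<in> P \<times> R. incompatible F {w ! r, w ! 0} {w ! r, w ! p}}"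
  let ?S5 = "{(p, r) \<in> P \<times> R. incompatible F {w ! (r - 2), w ! (r - 1)} {w ! (r - 1), w ! (p - 1)}}"
  let ?S6 = "{(p, r) \<in> P \<times> R. incompatible F {w ! (r + 1), w ! (r + 2)} {w ! (r + 1), w ! (p + 1)}}"
  have "real (card ?S1) \<le> \<Delta> * real (card P)"
    by (rule left[where v = "\<lambda>p. w ! p"]; (rule inj; auto)?; auto)
  moreover have "real (card ?S2) \<le> \<Delta> * real (card P)"
    by (rule left[where v = "\<lambda>p. w ! (p - 1)"]; (rule inj; auto)?; auto)
  moreover have "real (card ?S3) \<le> \<Delta> * real (card P)"
    by (rule left[where v = "\<lambda>p. w ! (p + 1)"]; (rule inj; auto)?; auto)
  moreover have "real (card ?S4) \<le> \<Delta> * real (card R)"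
    by (rule right[where v = "\<lambda>r. w ! r"]; (rule inj; auto)?; auto)
  moreover have "real (card ?S5) \<le> \<Delta> * real (card R)"
    by (rule right[where v = "\<lambda>r. w ! (r - 1)"]; (rule inj; auto)?; auto)
  moreover have "real (card ?S6) \<le> \<Delta> * real (card R)"
    by (rule right[where v = "\<lambda>r. w ! (r + 1)"]; (rule inj; auto)?; auto)
  moreover have "card ?S \<le> card (\<Union>(set [?S1, ?S2, ?S3, ?S4, ?S5, ?S6]))"
    by (rule card_mono) (auto intro: finite_subset[OF _ finite_cartesian_product[OF fin]])
  then have "card ?S \<le> card ?S1 + card ?S2 + card ?S3 + card ?S4 + card ?S5 + card ?S6"
    using card_Union_list_le[of "[?S1, ?S2, ?S3, ?S4, ?S5, ?S6]"] by simp
  then have "real (card ?S) \<le> real (card ?S1) + real (card ?S2) + real (card ?S3) +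
      real (card ?S4) + real (card ?S5) + real (card ?S6)"
    by (simp only: of_nat_add[symmetric] of_nat_le_iff)
  ultimately show ?thesis by linarith
qed

definition good_pair :: "'a set set \<Rightarrow> ('a \<Rightarrow> 'a set set set) \<Rightarrow> 'a list \<Rightarrow> nat \<Rightarrow> nat \<Rightarrow> bool" where
  "good_pair E F w p r \<longleftrightarrow> (p + 3 \<le> r \<or> r + 3 \<le> p) \<and> {w ! p, w ! r} \<in> E \<and>
     \<not> incompatible F {w ! (length w - 1), w ! p} {w ! p, w ! r} \<and>
     \<not> incompatible F {w ! r, w ! 0} {w ! r, w ! p} \<and> switchable E F w p r"

lemma exists_good_pair:
  assumes sys: "incompatibility_system E F" and bnd: "bounded_system \<Delta> E F"
    and "finite E" "0 \<le> \<Delta>" and w: "distinct w" "set w = V" and fin: "finite P" "finite R"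
    and pos: "\<forall>p\<in>P \<union> R. 2 \<le> p \<and> p + 3 \<le> length w"
    and many: "5 * real (card P) + 3 * real (card {(x, y). x \<in> V \<and> y \<in> V \<and> x \<noteq> y \<and> {x, y} \<notin> E})
      + 3 * \<Delta> * real (card P) + 3 * \<Delta> * real (card R) < real (card P) * real (card R)"
  shows "\<exists>p\<in>P. \<exists>r\<in>R. good_pair E F w p r"
proof (rule ccontr)
  let ?C = "{(p, r) \<in> P \<times> R. \<not> (p + 3 \<le> r \<or> r + 3 \<le> p) \<or> {w ! p, w ! r} \<notin> E \<or>
      {w ! (p - 1), w ! (r - 1)} \<notin> E \<or> {w ! (p + 1), w ! (r + 1)} \<notin> E}"
  let ?I = "{(p, r) \<in> P \<times> R.
      incompatible F {w ! (length w - 1), w ! p} {w ! p, w ! r} \<or>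
      incompatible F {w ! (p - 2), w ! (p - 1)} {w ! (p - 1), w ! (r - 1)} \<or>
      incompatible F {w ! (p + 1), w ! (p + 2)} {w ! (p + 1), w ! (r + 1)} \<or>
      incompatible F {w ! r, w ! 0} {w ! r, w ! p} \<or>
      incompatible F {w ! (r - 2), w ! (r - 1)} {w ! (r - 1), w ! (p - 1)} \<or>
      incompatible F {w ! (r + 1), w ! (r + 2)} {w ! (r + 1), w ! (p + 1)}}"
  assume "\<not> (\<exists>p\<in>P. \<exists>r\<in>R. good_pair E F w p r)"
  then have "P \<times> R \<subseteq> ?C \<union> ?I" unfolding good_pair_def switchable_def by auto
  then have "card (P \<times> R) \<le> card (?C \<union> ?I)"
    by (rule card_mono[rotated]) (auto intro: finite_subset[OF _ finite_cartesian_product[OF fin]])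
  also have "\<dots> \<le> card ?C + card ?I" by (rule card_Un_le)
  finally have "card P * card R \<le> card ?C + card ?I" by (simp only: card_cartesian_product)
  then have "real (card P) * real (card R) \<le> real (card ?C) + real (card ?I)"
    by (simp only: of_nat_mult[symmetric] of_nat_add[symmetric] of_nat_le_iff)
  then show False
    using card_bad_chord_pairs[OF w fin pos, of E] card_incompatible_pairs[OF assms(1-5) fin pos] many
    by linarith
qed

lemma small_parameters:
  fixes \<beta> \<mu> :: real
  assumes "\<beta> > 0" "\<mu> > 0" "\<beta> + 2 * sqrt \<mu> \<le> 1 / 1200"
  shows "\<beta> \<le> 1 / 1200" "\<mu> \<le> 1 / 5760000"
proof -
  have s: "0 \<le> sqrt \<mu>" "sqrt \<mu> \<le> 1 / 2400" using assms by auto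
  then show "\<beta> \<le> 1 / 1200" using assms(3) by linarith
  have "\<mu> = sqrt \<mu> * sqrt \<mu>" using assms(2) by simp
  also have "\<dots> \<le> (1 / 2400) * (1 / 2400)" using s by (intro mult_mono) auto
  finally show "\<mu> \<le> 1 / 5760000" by simp
qed

lemma large_n_if_slack:
  fixes \<mu> n M :: real
  assumes "0 \<le> n" "M \<le> n * n / 1200" "\<mu> * n \<le> n / 5760000" "1 \<le> M \<or> 1 \<le> \<mu> * n"
  shows "34 \<le> n"
proof (rule ccontr)
  assume "\<not> 34 \<le> n"
  then have "n * n \<le> 34 * 34" using assms(1) by (intro mult_mono) auto
  moreover have "\<mu> * n \<le> 34 / 5760000" using assms(3) \<open>\<not> 34 \<le> n\<close> by linarith
  ultimately show False using assms(2,4) by linarith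
qed

lemma switch_count_inequality:
  fixes \<beta> \<mu> n M D :: real
  assumes "\<beta> > 0" "\<mu> > 0" "\<beta> + 2 * sqrt \<mu> \<le> 1 / 1200" and n: "3 \<le> n"
    and M: "0 \<le> M" "M \<le> \<beta> * n^2" and D: "n / 5 \<le> D" "n - 1 - M \<le> D"
    and slack: "1 \<le> M \<or> 1 \<le> \<mu> * n"
  shows "0 \<le> D - 6 - \<mu> * n" and "5 * n + 6 * M + 6 * (\<mu> * n) * n < (D - 6 - \<mu> * n)^2"
proof -
  note small = small_parameters[OF assms(1-3)]
  have n0: "0 \<le> n" using n by simp
  have Mn: "M \<le> n * n / 1200"
  proof -
    have "\<beta> * n^2 \<le> (1/1200) * n^2" using small(1) by (intro mult_right_mono) auto
    then show ?thesis using M by (simp add: power2_eq_square)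
  qed
  have "\<mu> * n \<le> (1 / 5760000) * n" using small(2) n0 by (rule mult_right_mono)
  then have mun: "\<mu> * n \<le> n / 5760000" by simp
  then have "(\<mu> * n) * n \<le> (n / 5760000) * n" using n0 by (rule mult_right_mono)
  then have mun2: "(\<mu> * n) * n \<le> (n * n) / 5760000" by simp
  have n34: "34 \<le> n" by (rule large_n_if_slack[OF n0 Mn mun slack])
  txt \<open>For large \<open>n\<close> the bound \<open>n / 5 \<le> D\<close> suffices; for small \<open>n\<close> the density bound
    \<open>M \<le> n * n / 1200\<close> makes \<open>n - 1 - M \<le> D\<close> the stronger one.\<close>
  have "0 \<le> D - 6 - \<mu> * n \<and> 5 * n + 6 * M + 6 * (\<mu> * n) * n < (D - 6 - \<mu> * n)^2"
  proof (cases "250 \<le> n")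
    case True
    have X: "(17/100) * n \<le> D - 6 - \<mu> * n" using D mun True by linarith
    then have "((17/100) * n) * ((17/100) * n) \<le> (D - 6 - \<mu> * n) * (D - 6 - \<mu> * n)"
      using n0 by (intro mult_mono) auto
    then have sq: "(289/10000) * (n * n) \<le> (D - 6 - \<mu> * n)^2" by (simp add: power2_eq_square algebra_simps)
    have "250 * n \<le> n * n" using True n0 by (intro mult_right_mono) auto
    then show ?thesis using sq Mn mun2 X n0 True by (simp only: mult.assoc) linarith
  next
    case False
    have "n * n \<le> 250 * n" using False n0 by (intro mult_right_mono) auto
    then have Ml: "M \<le> (21/100) * n" using Mn n0 by linarith
    have X: "(58/100) * n \<le> D - 6 - \<mu> * n" using D Ml mun False n34 by linarith
    then have "((58/100) * n) * ((58/100) * n) \<le> (D - 6 - \<mu> * n) * (D - 6 - \<mu> * n)"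
      using n0 by (intro mult_mono) auto
    then have sq: "(3364/10000) * (n * n) \<le> (D - 6 - \<mu> * n)^2" by (simp add: power2_eq_square algebra_simps)
    have "34 * n \<le> n * n" using n34 n0 by (intro mult_right_mono) auto
    moreover have "(\<mu> * n) * n \<le> (1/1000) * n" using mun False n0 by (intro mult_right_mono) auto
    ultimately show ?thesis using sq Ml X n0 n34 by (simp only: mult.assoc) linarith
  qed
  then show "0 \<le> D - 6 - \<mu> * n" "5 * n + 6 * M + 6 * (\<mu> * n) * n < (D - 6 - \<mu> * n)^2" by auto
qed

lemma exists_good_admissible_pair:
  assumes sg: "simple_graph V E" and sys: "incompatibility_system E F"
    and bnd: "bounded_system \<Delta> E F" and "0 \<le> \<Delta>"
    and w: "distinct w" "set w = V" "length w = n"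
    and deg: "D \<le> real (degree E (w ! (n - 1)))" "D \<le> real (degree E (w ! 0))"
    and X: "0 \<le> D - 6 - \<Delta>" "5 * real n + 6 * M + 6 * \<Delta> * real n < (D - 6 - \<Delta>)^2"
    and NE: "real (card {(x, y). x \<in> V \<and> y \<in> V \<and> x \<noteq> y \<and> {x, y} \<notin> E}) \<le> 2 * M"
    and "card e = 2"
  shows "\<exists>p \<in> admissible_positions E F w (w ! (n - 1)) {w ! (n - 2), w ! (n - 1)} e.
    \<exists>r \<in> admissible_positions E F w (w ! 0) {w ! 1, w ! 0} e. good_pair E F w p r"
proof -
  let ?P = "admissible_positions E F w (w ! (n - 1)) {w ! (n - 2), w ! (n - 1)} e"
  let ?R = "admissible_positions E F w (w ! 0) {w ! 1, w ! 0} e"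
  let ?X = "D - 6 - \<Delta>"
  have "real (degree E (w ! (n - 1))) \<le> real (card ?P) + 6 + \<Delta>"
    "real (degree E (w ! 0)) \<le> real (card ?R) + 6 + \<Delta>"
    by (rule degree_le_card_admissible_positions[OF sg sys bnd \<open>0 \<le> \<Delta>\<close> w(1,2) _ \<open>card e = 2\<close>];
      simp)+
  then have P: "?X \<le> real (card ?P)" and R: "?X \<le> real (card ?R)" using deg by linarith+
  have "?P \<subseteq> {..<n}" "?R \<subseteq> {..<n}" using w(3) by (auto simp: admissible_positions_def)
  then have "card ?P \<le> n" "card ?R \<le> n" by (auto dest: card_mono[rotated])
  then have "\<Delta> * real (card ?P) \<le> \<Delta> * real n" "\<Delta> * real (card ?R) \<le> \<Delta> * real n"
    using \<open>0 \<le> \<Delta>\<close> by (simp_all add: mult_left_mono)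
  moreover have "?X * ?X \<le> real (card ?P) * real (card ?R)" using P R X(1) by (intro mult_mono) auto
  ultimately have "5 * real (card ?P) + 3 * real (card {(x, y). x \<in> V \<and> y \<in> V \<and> x \<noteq> y \<and> {x, y} \<notin> E})
      + 3 * \<Delta> * real (card ?P) + 3 * \<Delta> * real (card ?R) < real (card ?P) * real (card ?R)"
    using X(2) NE \<open>card ?P \<le> n\<close> by (simp add: power2_eq_square)
  moreover have "\<forall>p\<in>?P \<union> ?R. 2 \<le> p \<and> p + 3 \<le> length w" by (auto simp: admissible_positions_def)
  ultimately show ?thesis
    by (intro exists_good_pair[OF sys bnd simple_graph_finite_edges[OF sg] \<open>0 \<le> \<Delta>\<close> w(1,2)])
      (simp_all add: finite_admissible_positions)
qed

lemma good_pair_reduces_defect: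
  assumes w: "distinct w" "length w = n"
    and p: "p \<in> admissible_positions E F w (w ! (n - 1)) {w ! (n - 2), w ! (n - 1)} e"
    and r: "r \<in> admissible_positions E F w (w ! 0) {w ! 1, w ! 0} e"
    and good: "good_pair E F w p r"
    and e: "e \<in> cycle_edges w" "e \<noteq> {w ! (n - 1), w ! 0}"
    and defective: "{w ! (n - 1), w ! 0} \<notin> E \<or> w ! 0 \<in> conflict_vertices F w \<or>
      w ! (n - 1) \<in> conflict_vertices F w"
  shows "\<exists>N. distinct N \<and> set N = set w \<and> e \<in> cycle_edges N \<and> defect E F N < defect E F w"
proof (rule switch_at_positions[OF w, where lo = "min p r" and hi = "max p r" and y = "w ! p" and z = "w ! r"])
  show "switchable E F w (min p r) (max p r)"
    using good switchable_commute[of E F w p r] by (auto simp: good_pair_def min_def max_def)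
  show "{w ! p, w ! r} = {w ! min p r, w ! max p r}" by (auto simp: min_def max_def)
  show "w ! min p r \<notin> e" "w ! max p r \<notin> e"
    using p r by (auto simp: admissible_positions_def min_def max_def)
  show "2 \<le> min p r" "min p r + 3 \<le> max p r" "max p r + 3 \<le> n"
    using p r good w(2) by (auto simp: admissible_positions_def good_pair_def)
  show "{w ! (n - 1), w ! p} \<in> E" "{w ! r, w ! 0} \<in> E"
    "\<not> incompatible F {w ! (n - 2), w ! (n - 1)} {w ! (n - 1), w ! p}"
    "\<not> incompatible F {w ! 0, w ! 1} {w ! r, w ! 0}"
    using p r by (auto simp: admissible_positions_def insert_commute incompatible_commute)
  show "{w ! p, w ! r} \<in> E" "\<not> incompatible F {w ! (n - 1), w ! p} {w ! p, w ! r}"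
    "\<not> incompatible F {w ! p, w ! r} {w ! r, w ! 0}"
    using good w(2) by (auto simp: good_pair_def insert_commute incompatible_commute)
qed (use e defective in auto)

lemma one_le_bound_if_conflict_vertex:
  assumes sys: "incompatibility_system E F" and bnd: "bounded_system \<Delta> E F"
    and "finite E" "x \<in> conflict_vertices F xs"
  shows "1 \<le> \<Delta>"
proof -
  obtain f g where fg: "x \<in> f" "x \<in> g" "incompatible F f g"
    using assms(4) by (auto simp: conflict_vertices_def)
  note fgE = incompatible_at_common_vertex[OF sys fg(3) fg(1,2)]
  let ?S = "{e' \<in> E. e' \<noteq> f \<and> x \<in> e' \<and> {f, e'} \<in> F x}"
  have "g \<in> ?S" using fgE fg(2) by auto
  then have "0 < card ?S" using \<open>finite E\<close> by (auto simp: card_gt_0_iff)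
  moreover have "real (card ?S) \<le> \<Delta>" using bnd fgE fg(1) unfolding bounded_system_def by blast
  ultimately show ?thesis by linarith
qed


lemma defective_edge_slack:
  assumes sg: "simple_graph V E" and sys: "incompatibility_system E F" and bnd: "bounded_system \<Delta> E F"
    and xy: "x \<in> V" "y \<in> V" "x \<noteq> y"
    and defective: "{x, y} \<notin> E \<or> x \<in> conflict_vertices F xs \<or> y \<in> conflict_vertices F xs"
  shows "1 \<le> real (card (non_edges V E)) \<or> 1 \<le> \<Delta>"
proof (cases "{x, y} \<in> E")
  case True
  then obtain v where "v \<in> conflict_vertices F xs" using defective by blast
  then show ?thesis using one_le_bound_if_conflict_vertex[OF sys bnd simple_graph_finite_edges[OF sg]] by blast
next
  case False
  then have "{x, y} \<in> non_edges V E" using xy by (simp add: non_edges_def)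
  moreover have "finite V" using sg by (simp add: simple_graph_def)
  ultimately have "card (non_edges V E) \<noteq> 0" using finite_non_edges[of V E] by (auto simp: card_eq_0_iff)
  then show ?thesis by simp
qed
section \<open>Orderings of minimum defect\<close>

lemma exists_ordering_through_edge:
  assumes "simple_graph V E" "e \<in> E"
  shows "\<exists>xs. distinct xs \<and> set xs = V \<and> e \<in> cycle_edges xs"
proof -
  obtain u v where uv: "e = {u, v}" "u \<noteq> v" "u \<in> V" "v \<in> V"
    using simple_graph_edgeE[OF assms] .
  obtain xs where xs: "set xs = V - {u, v}" "distinct xs"
    using finite_distinct_list[of "V - {u, v}"] assms(1) by (auto simp: simple_graph_def)
  have "e \<in> cycle_edges (u # v # xs)"
    unfolding cycle_edges_def uv by (intro CollectI exI[of _ 0]) simp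
  then show ?thesis using xs uv by (intro exI[of _ "u # v # xs"]) auto
qed

lemma rotate_cycle_edge_to_end:
  assumes "f \<in> cycle_edges xs" "2 \<le> length xs"
  obtains k where "f = {rotate k xs ! (length xs - 1), rotate k xs ! 0}"
proof -
  obtain i where i: "i < length xs" "f = {xs ! i, xs ! (Suc i mod length xs)}"
    using assms(1) unfolding cycle_edges_def by auto
  have "xs \<noteq> []" using assms(2) by auto
  have "rotate (Suc i) xs ! 0 = xs ! (Suc i mod length xs)"
    using nth_rotate[of 0 xs "Suc i"] \<open>xs \<noteq> []\<close> by (simp del: rotate_Suc)
  moreover have "rotate (Suc i) xs ! (length xs - 1) = xs ! i"
  proof -
    have "Suc i + (length xs - 1) = i + length xs" using \<open>xs \<noteq> []\<close> by simp
    then have "(Suc i + (length xs - 1)) mod length xs = i" using i(1) by simp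
    then show ?thesis using nth_rotate[of "length xs - 1" xs "Suc i"] assms(2) by (simp del: rotate_Suc)
  qed
  ultimately show ?thesis using that[of "Suc i"] i(2) by (simp del: rotate_Suc)
qed

lemma defective_cycle_edge:
  assumes "defect E F xs \<noteq> 0" "e \<in> E"
  obtains h where "h \<in> cycle_edges xs" "h \<noteq> e" "h \<notin> E \<or> (\<exists>x\<in>h. x \<in> conflict_vertices F xs)"
proof (cases "cycle_edges xs - E = {}")
  case False
  then show ?thesis using that assms(2) by blast
next
  case True
  then have "conflict_vertices F xs \<noteq> {}" using assms(1) unfolding defect_def True by auto
  then obtain x f g where "f \<in> cycle_edges xs" "g \<in> cycle_edges xs" "f \<noteq> g" "x \<in> f" "x \<in> g"
    "x \<in> conflict_vertices F xs" unfolding conflict_vertices_def by blast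
  then show ?thesis using that by (cases "f = e") auto
qed

locale dense_bounded_setting =
  fixes V :: "'a set" and E :: "'a set set" and F :: "'a \<Rightarrow> 'a set set set"
    and \<beta> \<mu> :: real and n :: nat and e :: "'a set"
  assumes small: "\<beta> > 0" "\<mu> > 0" "\<beta> + 2 * sqrt \<mu> \<le> 1 / 1200"
    and sg: "simple_graph V E" and n: "n = card V" "3 \<le> n"
    and deg: "\<forall>v\<in>V. real (degree E v) \<ge> real n / 5"
    and dense: "real (card (non_edges V E)) \<le> \<beta> * real n ^ 2"
    and sys: "incompatibility_system E F" and bnd: "bounded_system (\<mu> * real n) E F"
    and edge: "e \<in> E"
begin

lemma defect_reducible_at_last_edge:
  assumes w: "distinct w" "set w = V" "e \<in> cycle_edges w"
    and last_edge: "e \<noteq> {w ! (n - 1), w ! 0}"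
    and defective: "{w ! (n - 1), w ! 0} \<notin> E \<or> w ! 0 \<in> conflict_vertices F w \<or>
      w ! (n - 1) \<in> conflict_vertices F w"
  shows "\<exists>N. distinct N \<and> set N = V \<and> e \<in> cycle_edges N \<and> defect E F N < defect E F w"
proof -
  have lw: "length w = n" using distinct_card[OF w(1)] w(2) n(1) by simp
  have fV: "finite V" using sg by (simp add: simple_graph_def)
  have ends: "w ! 0 \<in> V" "w ! (n - 1) \<in> V" "w ! (n - 1) \<noteq> w ! 0"
    using w(1,2) lw n(2) nth_mem[of 0 w] nth_mem[of "n - 1" w] by (auto simp: nth_eq_iff_index_eq)
  define M where "M = real (card (non_edges V E))"
  define D where "D = min (real (degree E (w ! 0))) (real (degree E (w ! (n - 1))))"
  have slack: "1 \<le> M \<or> 1 \<le> \<mu> * real n"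
    unfolding M_def by (rule defective_edge_slack[OF sg sys bnd ends(2,1,3)]) (use defective in blast)
  have "real n / 5 \<le> D" "real n - 1 - M \<le> D"
    using deg ends card_le_degree_non_edges[OF sg ends(1)] card_le_degree_non_edges[OF sg ends(2)] n(1)
    unfolding D_def M_def by auto
  note count = switch_count_inequality[OF small _ _ _ this slack]
  have "real (card {(x, y). x \<in> V \<and> y \<in> V \<and> x \<noteq> y \<and> {x, y} \<notin> E}) \<le> 2 * M"
    using card_ordered_non_edges_le[OF fV, of E] unfolding M_def by linarith
  moreover have "card e = 2" using edge sg by (auto elim: simple_graph_edgeE)
  ultimately obtain p r where
      "p \<in> admissible_positions E F w (w ! (n - 1)) {w ! (n - 2), w ! (n - 1)} e"
      "r \<in> admissible_positions E F w (w ! 0) {w ! 1, w ! 0} e" "good_pair E F w p r"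
    using exists_good_admissible_pair[OF sg sys bnd _ w(1,2) lw, of D M e] count n(2) dense small(2)
    unfolding D_def M_def by (auto simp: algebra_simps)
  then show ?thesis
    using good_pair_reduces_defect[OF w(1) lw _ _ _ w(3) last_edge defective] w(2) by metis
qed

lemma defect_reducible:
  assumes L: "distinct L" "set L = V" "e \<in> cycle_edges L" and "defect E F L \<noteq> 0"
  shows "\<exists>N. distinct N \<and> set N = V \<and> e \<in> cycle_edges N \<and> defect E F N < defect E F L"
proof -
  obtain h where h: "h \<in> cycle_edges L" "h \<noteq> e" "h \<notin> E \<or> (\<exists>x\<in>h. x \<in> conflict_vertices F L)"
    by (rule defective_cycle_edge[OF \<open>defect E F L \<noteq> 0\<close> edge])
  have len: "length L = n" using L n(1) distinct_card by fastforce
  then have "2 \<le> length L" using n(2) by simp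
  then obtain k where "h = {rotate k L ! (length L - 1), rotate k L ! 0}"
    using rotate_cycle_edge_to_end[OF h(1)] by blast
  then have hk: "h = {rotate k L ! (n - 1), rotate k L ! 0}" using len by simp
  have same: "cycle_edges (rotate k L) = cycle_edges L"
    by (rule cycle_edges_rotate) (use len n(2) in simp)
  then have "conflict_vertices F (rotate k L) = conflict_vertices F L" "defect E F (rotate k L) = defect E F L"
    by (simp_all add: conflict_vertices_def defect_def)
  moreover have "distinct (rotate k L)" "set (rotate k L) = V" "e \<in> cycle_edges (rotate k L)"
    using L same by auto
  ultimately show ?thesis using defect_reducible_at_last_edge[of "rotate k L"] h hk by auto
qed

lemma exists_ordering_with_defect_0:
  "\<exists>L. distinct L \<and> set L = V \<and> e \<in> cycle_edges L \<and> defect E F L = 0"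
proof -
  let ?orderings = "{xs. distinct xs \<and> set xs = V \<and> e \<in> cycle_edges xs}"
  obtain L0 where "L0 \<in> ?orderings" using exists_ordering_through_edge[OF sg edge] by auto
  then have "\<exists>L. L \<in> ?orderings \<and> (\<forall>L'. L' \<in> ?orderings \<longrightarrow> defect E F L \<le> defect E F L')"
    by (rule ex_has_least_nat)
  then obtain L where L: "L \<in> ?orderings" and min: "\<And>L'. L' \<in> ?orderings \<Longrightarrow> defect E F L \<le> defect E F L'"
    by blast
  have "defect E F L = 0"
  proof (rule ccontr)
    assume "defect E F L \<noteq> 0"
    then obtain N where "N \<in> ?orderings" "defect E F N < defect E F L"
      using defect_reducible L by auto
    then show False using min by fastforce
  qed
  then show ?thesis using L by blast
qed

end

theorem theorem3p4:
  fixes V :: "'a set" and E :: "'a set set" and F :: "'a \<Rightarrow> 'a set set set"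
    and \<beta> \<mu> :: real and n :: nat
  assumes "\<beta> > 0" and "\<mu> > 0" and "\<beta> + 2 * sqrt \<mu> \<le> 1 / 1200"
    and "simple_graph V E" and "n = card V" and "n \<ge> 3"
    and "\<forall>v\<in>V. real (degree E v) \<ge> real n / 5"
    and "real (card E) \<ge> real (n choose 2) - \<beta> * real n ^ 2"
    and "incompatibility_system E F" and "bounded_system (\<mu> * real n) E F"
    and "e \<in> E"
  shows "\<exists>vs. ham_cycle V E vs \<and> e \<in> cycle_edges vs \<and> compatible_cycle F vs"
proof -
  have "card E \<le> n choose 2"
    using card_mono[OF finite_two_subsets simple_graph_edges_subset[OF assms(4)]] assms(4,5)
    by (simp add: simple_graph_def n_subsets)
  then have "real (card (non_edges V E)) \<le> \<beta> * real n ^ 2"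
    using card_non_edges[OF assms(4)] assms(5,8) by (simp add: of_nat_diff)
  then interpret dense_bounded_setting V E F \<beta> \<mu> n e
    using assms by unfold_locales auto
  obtain L where L: "distinct L" "set L = V" "e \<in> cycle_edges L" "defect E F L = 0"
    using exists_ordering_with_defect_0 by blast
  moreover have "3 \<le> length L" using L(1,2) n distinct_card by fastforce
  ultimately show ?thesis using compatible_ham_cycle_if_defect_0[OF sys] by blast
qed

end
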